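(* Let $k\geq 2$ be an integer, let $t_0,t_1,\ldots,t_{k-1}$ be arbitrary (real or complex) numbers, and let $(\mathfrak{F}_n^{(k)})_{n\geq 0}$ be the $k$-generalized Fibonacci-like sequence defined by $\mathfrak{F}_i^{(k)}=t_i$ for $0\leq i\leq k-1$ and $\mathfrak{F}_n^{(k)}=\mathfrak{F}_{n-1}^{(k)}+\mathfrak{F}_{n-2}^{(k)}+\cdots+\mathfrak{F}_{n-k}^{(k)}$ for $n\geq k$. Let $\lambda_1,\lambda_2,\ldots,\lambda_k$ be the roots of the characteristic polynomial $P(\lambda)=\lambda^k-\lambda^{k-1}-\cdots-\lambda-1$. Then for all $n\geq k$, $$\mathfrak{F}_n^{(k)}=\sum_{m=1}^{k}\left[\frac{\displaystyle\sum_{p=1}^{k}\left(\lambda_m^{k-p}-\sum_{i=1}^{k-p}\lambda_m^{(k-p)-i}\right)t_{p-1}}{\displaystyle\prod_{j=1,\ j\neq m}^{k}(\lambda_m-\lambda_j)}\right]\lambda_m^n.$$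
   Context: The roots $\lambda_1,\ldots,\lambda_k$ are complex numbers, listed with multiplicity (they are in fact pairwise distinct, so the denominators are nonzero). An empty sum (e.g. $\sum_{i=1}^{0}$ when $p=k$) equals $0$. *)

theory Defs
  imports Complex_Main
begin

end

theory Submission
  imports Defs "HOL-Computational_Algebra.Polynomial"
begin

text \<open>
  Multiplying the characteristic polynomial by \<open>x - 1\<close> gives \<open>x^(k+1) - 2 x^k + 1\<close>, which
  has no double root when \<open>k \<ge> 2\<close>; so the \<open>\<lambda>\<^sub>m\<close> are distinct and every solution of the
  recurrence is a combination of the sequences \<open>\<lambda>\<^sub>m^n\<close>. By Lagrange interpolation,
  \<open>S n = \<Sum>\<^sub>m \<lambda>\<^sub>m^n / \<Prod>\<^sub>j\<^sub>\<noteq>\<^sub>m (\<lambda>\<^sub>m - \<lambda>\<^sub>j)\<close> is the solution with initial values \<open>0, \<dots>, 0, 1\<close>.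
  The coefficient of \<open>t (p - 1)\<close> in the closed form is \<open>S (n + k - p) - \<Sum>\<^sub>i S (n + k - p - i)\<close>,
  a solution whose initial values form the unit vector at \<open>p - 1\<close>.
\<close>

lemma sum_power_div_prod_diff:
  fixes lam :: "'b \<Rightarrow> 'a::field"
  assumes fin: "finite I" and inj: "inj_on lam I" and s: "s < card I"
  shows "(\<Sum>m\<in>I. lam m ^ s / (\<Prod>j\<in>I-{m}. (lam m - lam j))) = (if s = card I - 1 then 1 else 0)"
proof -
  define D where "D m = (\<Prod>j\<in>I-{m}. (lam m - lam j))" for m
  define B where "B m = (\<Prod>j\<in>I-{m}. [:-lam j, 1:])" for m
  define L where "L = (\<Sum>m\<in>I. smult (lam m ^ s / D m) (B m))"
  have degB: "degree (B m) = card I - 1" if "m \<in> I" for m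
    unfolding B_def using that fin by (subst degree_prod_sum_eq) (auto simp: card_Diff_singleton)
  have lcB: "coeff (B m) (card I - 1) = 1" if "m \<in> I" for m
    using lead_coeff_prod[of "\<lambda>j. [:-lam j, 1:]" "I-{m}"] degB[OF that] unfolding B_def by simp
  have D0: "D m \<noteq> 0" if "m \<in> I" for m
    unfolding D_def using fin inj that by (auto simp: inj_on_def)
  have polyL: "poly L (lam r) = lam r ^ s" if r: "r \<in> I" for r
  proof -
    have "poly L (lam r) = (\<Sum>m\<in>I. (lam m ^ s / D m) * poly (B m) (lam r))"
      unfolding L_def by (simp add: poly_sum)
    also have "\<dots> = (\<Sum>m\<in>{r}. (lam m ^ s / D m) * poly (B m) (lam r))"
    proof (rule sum.mono_neutral_right)
      show "\<forall>m\<in>I - {r}. lam m ^ s / D m * poly (B m) (lam r) = 0"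
        unfolding B_def using fin r by (auto simp: poly_prod)
    qed (use fin r in auto)
    also have "\<dots> = lam r ^ s"
      using D0[OF r] unfolding B_def D_def by (simp add: poly_prod)
    finally show ?thesis .
  qed
  have degL: "degree L < card I"
  proof -
    have "degree L \<le> card I - 1"
      unfolding L_def
      by (rule degree_sum_le) (use degB fin in \<open>auto intro: order.trans[OF degree_smult_le]\<close>)
    thus ?thesis using s by linarith
  qed
  have "L = monom 1 s"
    by (rule poly_eqI_degree[of "lam ` I"])
      (use polyL degL s inj fin in \<open>auto simp: card_image poly_monom degree_monom_eq\<close>)
  hence "coeff L (card I - 1) = (if s = card I - 1 then 1 else 0)" by (simp add: coeff_monom)
  moreover have "coeff L (card I - 1) = (\<Sum>m\<in>I. lam m ^ s / D m)"
    unfolding L_def coeff_sum coeff_smult by (intro sum.cong refl) (simp add: lcB[simplified])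
  ultimately show ?thesis unfolding D_def by simp
qed

lemma inj_on_if_prod_linear_dvd_rsquarefree:
  fixes lam :: "'b \<Rightarrow> 'a::field_char_0"
  assumes "rsquarefree q" and dvd: "(\<Prod>m\<in>I. [:-lam m, 1:]) dvd q" and "finite I"
  shows "inj_on lam I"
proof (rule inj_onI, rule ccontr)
  fix a b assume a: "a \<in> I" and b: "b \<in> I" and eq: "lam a = lam b" and "a \<noteq> b"
  have "(\<Prod>m\<in>I. [:-lam m, 1:]) = [:-lam a, 1:] * (\<Prod>m\<in>I-{a}. [:-lam m, 1:])"
    using a \<open>finite I\<close> by (simp add: prod.remove)
  also have "(\<Prod>m\<in>I-{a}. [:-lam m, 1:]) = [:-lam b, 1:] * (\<Prod>m\<in>I-{a}-{b}. [:-lam m, 1:])"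
    using b \<open>a \<noteq> b\<close> \<open>finite I\<close> by (subst prod.remove[of _ b]) auto
  finally have "(\<Prod>m\<in>I. [:-lam m, 1:]) = [:-lam a, 1:] ^ 2 * (\<Prod>m\<in>I-{a}-{b}. [:-lam m, 1:])"
    by (simp only: eq power2_eq_square mult.assoc)
  hence "[:-lam a, 1:] ^ 2 dvd (\<Prod>m\<in>I. [:-lam m, 1:])" by simp
  then have "[:-lam a, 1:] ^ 2 dvd q" using dvd by (rule dvd_trans)
  then obtain r where q: "q = [:-lam a, 1:] ^ 2 * r" by (elim dvdE)
  have "poly q (lam a) = 0 \<and> poly (pderiv q) (lam a) = 0"
    unfolding q pderiv_mult pderiv_power by simp
  with \<open>rsquarefree q\<close> show False by (auto simp: rsquarefree_roots)
qed

lemma Bernoulli_strict_instance: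
  fixes k :: nat assumes "k \<ge> 2"
  shows "(2 * real k / (real k + 1)) ^ k \<noteq> (real k + 1) / 2"
proof -
  define x where "x = (real k - 1) / (real k + 1)"
  have x: "-1 \<le> x" using assms unfolding x_def by (simp add: field_simps)
  have e: "1 + x = 2 * real k / (real k + 1)" unfolding x_def by (simp add: field_simps)
  have "1 + real k * x \<le> (1 + x) ^ k" by (rule Bernoulli_inequality[OF x])
  moreover have "(real k + 1) / 2 < 1 + real k * x"
  proof -
    have "(real k - 1)^2 > 0" using assms by simp
    hence "(real k + 1) * (real k + 1) < 2 * (real k + 1) + 2 * real k * (real k - 1)"
      by (simp add: power2_eq_square algebra_simps)
    thus ?thesis unfolding x_def by (simp add: field_simps)
  qed
  ultimately show ?thesis using e by auto
qed

text \<open>A double root must be \<open>2k/(k+1)\<close>, where Bernoulli's inequality shows the polynomial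
  does not vanish.\<close>
lemma rsquarefree_shifted_kbonacci_poly:
  assumes k: "k \<ge> 2"
  shows "rsquarefree (monom 1 (k + 1) - smult 2 (monom 1 k) + 1 :: complex poly)"
  unfolding rsquarefree_roots
proof (intro allI notI)
  fix mu :: complex
  define c :: complex where "c = of_nat k"
  assume "poly (monom 1 (k + 1) - smult 2 (monom 1 k) + 1) mu = 0 \<and>
          poly (pderiv (monom 1 (k + 1) - smult 2 (monom 1 k) + 1)) mu = 0"
  hence root: "mu ^ (k + 1) - 2 * mu ^ k + 1 = 0"
    and deriv: "(c + 1) * mu ^ k - 2 * c * mu ^ (k - 1) = 0"
    by (simp_all add: c_def pderiv_add pderiv_diff pderiv_smult pderiv_monom poly_monom algebra_simps)
  have mu0: "mu \<noteq> 0" using root k by (auto simp: power_0_left)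
  have c1: "c + 1 \<noteq> 0" unfolding c_def by (metis of_nat_Suc of_nat_eq_0_iff add.commute nat.distinct(1))
  have "mu ^ k = mu * mu ^ (k - 1)" using k by (cases k) auto
  with deriv have "mu ^ (k - 1) * ((c + 1) * mu - 2 * c) = 0" by (simp add: algebra_simps)
  hence "(c + 1) * mu = 2 * c" using mu0 by simp
  hence mu: "mu = 2 * c / (c + 1)" using c1 by (simp add: eq_divide_eq mult.commute)
  have "mu ^ k * (mu - 2) = -1" using root by (simp add: algebra_simps)
  moreover have "mu - 2 = - 2 / (c + 1)" unfolding mu using c1 by (simp add: field_simps)
  ultimately have "mu ^ k = (c + 1) / 2" using c1 by (simp add: field_simps)
  hence "complex_of_real ((2 * real k / (real k + 1)) ^ k) = complex_of_real ((real k + 1) / 2)"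
    unfolding mu c_def by simp
  thus False using Bernoulli_strict_instance[OF k] of_real_eq_iff by blast
qed

lemma kbonacci_char_roots_distinct:
  fixes lam :: "nat \<Rightarrow> complex"
  assumes k: "k \<ge> 2"
    and roots: "\<And>x. x ^ k - (\<Sum>i<k. x ^ i) = (\<Prod>m=1..k. (x - lam m))"
  shows "inj_on lam {1..k}"
proof -
  define P where "P = (\<Prod>m\<in>{1..k}. [:-lam m, 1:])"
  have "poly ([:-1, 1:] * P) x = poly (monom 1 (k + 1) - smult 2 (monom 1 k) + 1) x" for x :: complex
  proof -
    have "poly ([:-1, 1:] * P) x = (x - 1) * (x ^ k - (\<Sum>i<k. x ^ i))"
      unfolding P_def roots by (simp add: poly_prod algebra_simps)
    also have "\<dots> = (x - 1) * x ^ k - (x ^ k - 1)" by (simp add: power_diff_1_eq algebra_simps)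
    finally show ?thesis by (simp add: poly_monom algebra_simps)
  qed
  hence "[:-1, 1:] * P = monom 1 (k + 1) - smult 2 (monom 1 k) + 1"
    by (simp add: poly_eq_poly_eq_iff[symmetric] fun_eq_iff)
  hence "P dvd monom 1 (k + 1) - smult 2 (monom 1 k) + 1"
    by (metis dvd_triv_right)
  with rsquarefree_shifted_kbonacci_poly[OF k] show ?thesis
    unfolding P_def by (rule inj_on_if_prod_linear_dvd_rsquarefree) simp
qed

lemma kbonacci_char_root:
  fixes lam :: "nat \<Rightarrow> complex"
  assumes roots: "\<And>x. x ^ k - (\<Sum>i<k. x ^ i) = (\<Prod>m=1..k. (x - lam m))" and m: "m \<in> {1..k}"
  shows "lam m ^ k = (\<Sum>i<k. lam m ^ i)"
proof -
  have "(\<Prod>j=1..k. (lam m - lam j)) = 0" using m by (intro prod_zero) auto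
  then have "lam m ^ k - (\<Sum>i<k. lam m ^ i) = 0" using roots[of "lam m"] by (simp only:)
  then show ?thesis by simp
qed

definition kbonacci_rec :: "nat \<Rightarrow> (nat \<Rightarrow> 'a::comm_monoid_add) \<Rightarrow> bool"
  where "kbonacci_rec k F \<longleftrightarrow> (\<forall>n\<ge>k. F n = (\<Sum>j=1..k. F (n - j)))"

lemma kbonacci_rec_unique:
  assumes F: "kbonacci_rec k F" and G: "kbonacci_rec k G" and init: "\<And>i. i < k \<Longrightarrow> F i = G i"
  shows "F = G"
proof
  fix n show "F n = G n"
  proof (induction n rule: less_induct)
    case (less n)
    show ?case
    proof (cases "n < k")
      case False
      then have "F n = (\<Sum>j=1..k. F (n - j))" using F by (simp add: kbonacci_rec_def)
      also have "\<dots> = (\<Sum>j=1..k. G (n - j))" by (intro sum.cong refl less.IH) (use False in auto)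
      also have "\<dots> = G n" using False G by (simp add: kbonacci_rec_def)
      finally show ?thesis .
    qed (rule init)
  qed
qed

lemma kbonacci_rec_power:
  fixes x :: "'a::comm_semiring_1"
  assumes root: "x ^ k = (\<Sum>i<k. x ^ i)"
  shows "kbonacci_rec k (\<lambda>n. x ^ n)"
  unfolding kbonacci_rec_def
proof (intro allI impI)
  fix n assume n: "k \<le> n"
  have "x ^ n = x ^ (n - k) * x ^ k" using n by (simp flip: power_add)
  also have "\<dots> = (\<Sum>i<k. x ^ (n - k + i))" by (simp add: root sum_distrib_left power_add)
  also have "\<dots> = (\<Sum>j=1..k. x ^ (n - j))"
    by (rule sum.reindex_bij_witness[of _ "\<lambda>j. k - j" "\<lambda>i. k - i"]) (use n in auto)
  finally show "x ^ n = (\<Sum>j=1..k. x ^ (n - j))" .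
qed

lemma kbonacci_rec_lincomb:
  fixes f :: "'b \<Rightarrow> nat \<Rightarrow> 'a::comm_semiring_1"
  assumes "\<And>m. m \<in> I \<Longrightarrow> kbonacci_rec k (f m)"
  shows "kbonacci_rec k (\<lambda>n. \<Sum>m\<in>I. c m * f m n)"
  unfolding kbonacci_rec_def
proof (intro allI impI)
  fix n assume "k \<le> n"
  then have "(\<Sum>m\<in>I. c m * f m n) = (\<Sum>m\<in>I. \<Sum>j=1..k. c m * f m (n - j))"
    using assms by (intro sum.cong refl) (simp add: kbonacci_rec_def sum_distrib_left)
  also have "\<dots> = (\<Sum>j=1..k. \<Sum>m\<in>I. c m * f m (n - j))" by (rule sum.swap)
  finally show "(\<Sum>m\<in>I. c m * f m n) = (\<Sum>j=1..k. \<Sum>m\<in>I. c m * f m (n - j))" .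
qed

lemma kbonacci_rec_shifted_difference:
  fixes S :: "nat \<Rightarrow> 'a::comm_ring_1"
  assumes rec: "kbonacci_rec k S" and init: "\<And>n. n < k \<Longrightarrow> S n = (if n = k - 1 then 1 else 0)"
    and p: "p \<in> {1..k}" and i: "i < k"
  shows "S (i + (k - p)) - (\<Sum>l=1..k-p. S (i + (k - p) - l)) = (if i = p - 1 then 1 else 0)"
proof (cases "i < p")
  case True
  have "(\<Sum>l=1..k-p. S (i + (k - p) - l)) = 0"
    by (rule sum.neutral) (use True p i init in auto)
  moreover have "S (i + (k - p)) = (if i = p - 1 then 1 else 0)" using init[of "i + (k - p)"] True p by auto
  ultimately show ?thesis by simp
next
  case False
  have "S (i + (k - p)) = (\<Sum>j=1..k. S (i + (k - p) - j))"
    using False p rec by (simp add: kbonacci_rec_def)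
  also have "{1..k} = {1..k-p} \<union> {k-p+1..k}" using p by auto
  also have "(\<Sum>j\<in>{1..k-p} \<union> {k-p+1..k}. S (i + (k - p) - j))
      = (\<Sum>j=1..k-p. S (i + (k - p) - j)) + (\<Sum>j=k-p+1..k. S (i + (k - p) - j))"
    by (rule sum.union_disjoint) auto
  also have "(\<Sum>j=k-p+1..k. S (i + (k - p) - j)) = 0"
    \<comment> \<open>the arguments run through \<open>i - p, \<dots>, i - 1 < k - 1\<close>\<close>
    by (rule sum.neutral) (use False p i init in auto)
  finally show ?thesis using False p by auto
qed

lemma shifted_power_difference:
  fixes x :: "'a::comm_ring_1"
  shows "(x ^ q - (\<Sum>l=1..q. x ^ (q - l))) * x ^ n = x ^ (n + q) - (\<Sum>l=1..q. x ^ (n + q - l))"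
proof -
  have "(\<Sum>l=1..q. x ^ (q - l)) * x ^ n = (\<Sum>l=1..q. x ^ (n + q - l))"
    unfolding sum_distrib_right by (intro sum.cong refl) (simp flip: power_add add: add.commute)
  moreover have "x ^ q * x ^ n = x ^ (n + q)" by (simp add: power_add mult.commute)
  ultimately show ?thesis by (simp only: left_diff_distrib)
qed

lemma closed_form_eq_sum_shifted_differences:
  fixes x :: "'b \<Rightarrow> 'a::field"
  assumes S: "\<And>n. S n = (\<Sum>m\<in>I. x m ^ n / d m)"
  shows "(\<Sum>m\<in>I. ((\<Sum>p=1..k. (x m ^ (k - p) - (\<Sum>i=1..k-p. x m ^ ((k - p) - i))) * t (p - 1)) / d m)
            * x m ^ n)
       = (\<Sum>p=1..k. t (p - 1) * (S (n + (k - p)) - (\<Sum>l=1..k-p. S (n + (k - p) - l))))"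
proof -
  have summand: "((x m ^ (k - p) - (\<Sum>i=1..k-p. x m ^ ((k - p) - i))) * t (p - 1)) / d m * x m ^ n
      = t (p - 1) * (x m ^ (n + (k - p)) / d m - (\<Sum>l=1..k-p. x m ^ (n + (k - p) - l) / d m))" for m p
  proof -
    have "((x m ^ (k - p) - (\<Sum>i=1..k-p. x m ^ ((k - p) - i))) * t (p - 1)) / d m * x m ^ n
        = t (p - 1) * ((x m ^ (k - p) - (\<Sum>i=1..k-p. x m ^ ((k - p) - i))) * x m ^ n / d m)"
      by (simp add: divide_inverse ac_simps)
    then show ?thesis by (simp only: shifted_power_difference diff_divide_distrib sum_divide_distrib)
  qed
  have "(\<Sum>m\<in>I. ((\<Sum>p=1..k. (x m ^ (k - p) - (\<Sum>i=1..k-p. x m ^ ((k - p) - i))) * t (p - 1)) / d m)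
            * x m ^ n)
      = (\<Sum>m\<in>I. \<Sum>p=1..k. t (p - 1) *
            (x m ^ (n + (k - p)) / d m - (\<Sum>l=1..k-p. x m ^ (n + (k - p) - l) / d m)))"
    unfolding sum_divide_distrib sum_distrib_right summand ..
  also have "\<dots> = (\<Sum>p=1..k. t (p - 1) * (S (n + (k - p)) - (\<Sum>l=1..k-p. S (n + (k - p) - l))))"
    unfolding S
    by (subst sum.swap) (intro sum.cong refl, simp add: sum_distrib_left sum_subtractf
        right_diff_distrib, rule sum.swap)
  finally show ?thesis .
qed

theorem theorem2:
  fixes k :: nat and t :: "nat \<Rightarrow> complex" and F :: "nat \<Rightarrow> complex"
    and lam :: "nat \<Rightarrow> complex"
  assumes "k \<ge> 2"
    and init: "\<And>i. i < k \<Longrightarrow> F i = t i"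
    and rec: "\<And>n. n \<ge> k \<Longrightarrow> F n = (\<Sum>j=1..k. F (n - j))"
    and roots: "\<And>x. x ^ k - (\<Sum>i<k. x ^ i) = (\<Prod>m=1..k. (x - lam m))"
    and "n \<ge> k"
  shows "F n = (\<Sum>m=1..k.
            ((\<Sum>p=1..k. (lam m ^ (k - p) - (\<Sum>i=1..k-p. lam m ^ ((k - p) - i))) * t (p - 1))
             / (\<Prod>j\<in>{1..k} - {m}. (lam m - lam j))) * lam m ^ n)"
proof -
  define D where "D m = (\<Prod>j\<in>{1..k} - {m}. (lam m - lam j))" for m
  define S where "S n = (\<Sum>m=1..k. lam m ^ n / D m)" for n
  define G where "G n = (\<Sum>m=1..k.
            ((\<Sum>p=1..k. (lam m ^ (k - p) - (\<Sum>i=1..k-p. lam m ^ ((k - p) - i))) * t (p - 1))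
             / D m) * lam m ^ n)" for n
  note root = kbonacci_char_root[OF roots]
  have S_rec: "kbonacci_rec k S"
    using kbonacci_rec_lincomb[of "{1..k}" k "\<lambda>m n. lam m ^ n" "\<lambda>m. inverse (D m)"]
    unfolding S_def by (simp add: kbonacci_rec_power root divide_inverse mult.commute)
  have S_init: "S n = (if n = k - 1 then 1 else 0)" if "n < k" for n
    using sum_power_div_prod_diff[of "{1..k}" lam n] kbonacci_char_roots_distinct[OF assms(1) roots] that
    unfolding S_def D_def by simp
  have G_rec: "kbonacci_rec k G"
    unfolding G_def by (intro kbonacci_rec_lincomb kbonacci_rec_power root)
  have G_init: "G i = t i" if "i < k" for i
  proof -
    have "G i = (\<Sum>p=1..k. t (p - 1) * (if i = p - 1 then 1 else 0))"
      unfolding G_def closed_form_eq_sum_shifted_differences[OF S_def]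
      by (intro sum.cong refl) (simp only: kbonacci_rec_shifted_difference[OF S_rec S_init _ that])
    also have "\<dots> = (\<Sum>p=1..k. if p = Suc i then t i else 0)"
      by (intro sum.cong refl) auto
    finally show ?thesis using that by simp
  qed
  have "F = G"
    by (rule kbonacci_rec_unique[OF _ G_rec]) (use rec init G_init in \<open>auto simp: kbonacci_rec_def\<close>)
  then show ?thesis unfolding G_def D_def by simp
qed

end
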